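(* Let $G$ be a proper interval graph with a proper vertex ordering $<$. Let $e_1,e_2,e_3$ be distinct edges of $G$ such that $l(e_1)\leq l(e_2)\leq l(e_3)$ and $r(e_1)\leq r(e_2)\leq r(e_3)$. If $\{e_1,e_3\}$ is not a uniquely restricted matching in $G$, then neither $\{e_1,e_2\}$ nor $\{e_2,e_3\}$ is a uniquely restricted matching in $G$.
   Context: Graphs are finite, simple, undirected. A proper interval graph is a graph with an interval representation (closed real intervals, adjacency iff intersection for distinct vertices) in which no interval strictly contains another. An ordering $<$ of $V(G)$ is a proper vertex ordering if for all $u<v<w$, $uw\in E(G)$ implies $uv,vw\in E(G)$; $\leq$ denotes $<$ or equality. For an edge $e=uv$, $l(e)=\min_<\{u,v\}$ and $r(e)=\max_<\{u,v\}$. A matching is a set of pairwise vertex-disjoint edges; it is uniquely restricted if no other matching of $G$ matches exactly the same vertex set (a set of edges that is not a matching is in particular not a uniquely restricted matching). *)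

theory Defs
  imports Complex_Main
begin

definition graph :: "'a set \<Rightarrow> 'a set set \<Rightarrow> bool" where
  "graph V E \<longleftrightarrow> finite V \<and> (\<forall>e\<in>E. \<exists>u v. u \<noteq> v \<and> u \<in> V \<and> v \<in> V \<and> e = {u, v})"

definition ivl :: "real \<times> real \<Rightarrow> real set" where
  "ivl p = {fst p .. snd p}"

definition proper_interval_graph :: "'a set \<Rightarrow> 'a set set \<Rightarrow> bool" where
  "proper_interval_graph V E \<longleftrightarrow> graph V E \<and>
     (\<exists>f :: 'a \<Rightarrow> real \<times> real.
        (\<forall>v\<in>V. fst (f v) \<le> snd (f v)) \<and>
        (\<forall>u\<in>V. \<forall>v\<in>V. u \<noteq> v \<longrightarrow> ({u, v} \<in> E \<longleftrightarrow> ivl (f u) \<inter> ivl (f v) \<noteq> {})) \<and>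
        (\<forall>u\<in>V. \<forall>v\<in>V. \<not> (ivl (f u) \<subset> ivl (f v))))"

definition proper_vertex_ordering :: "'a set \<Rightarrow> 'a set set \<Rightarrow> ('a \<times> 'a) set \<Rightarrow> bool" where
  "proper_vertex_ordering V E lt \<longleftrightarrow> lt \<subseteq> V \<times> V \<and> strict_linear_order_on V lt \<and>
     (\<forall>u v w. (u, v) \<in> lt \<and> (v, w) \<in> lt \<and> {u, w} \<in> E \<longrightarrow> {u, v} \<in> E \<and> {v, w} \<in> E)"

definition ole :: "('a \<times> 'a) set \<Rightarrow> 'a \<Rightarrow> 'a \<Rightarrow> bool" where
  "ole lt x y \<longleftrightarrow> (x, y) \<in> lt \<or> x = y"

definition lend :: "('a \<times> 'a) set \<Rightarrow> 'a set \<Rightarrow> 'a" where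
  "lend lt e = (THE u. u \<in> e \<and> (\<forall>w\<in>e. ole lt u w))"

definition rend :: "('a \<times> 'a) set \<Rightarrow> 'a set \<Rightarrow> 'a" where
  "rend lt e = (THE u. u \<in> e \<and> (\<forall>w\<in>e. ole lt w u))"

definition matching :: "'a set set \<Rightarrow> 'a set set \<Rightarrow> bool" where
  "matching E M \<longleftrightarrow> M \<subseteq> E \<and> (\<forall>e\<in>M. \<forall>f\<in>M. e \<noteq> f \<longrightarrow> e \<inter> f = {})"

definition uniquely_restricted :: "'a set set \<Rightarrow> 'a set set \<Rightarrow> bool" where
  "uniquely_restricted E M \<longleftrightarrow> matching E M \<and>
     (\<forall>M'. matching E M' \<and> \<Union>M' = \<Union>M \<longrightarrow> M' = M)"

end

theory Submission
  imports Defs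
begin

text \<open>Write every edge as \<open>ab\<close> with \<open>a < b\<close>. For two distinct edges \<open>ab\<close>, \<open>cd\<close> with
  \<open>a \<le> c\<close> and \<open>b \<le> d\<close>, the proper ordering collapses all ways of failing to be a uniquely
  restricted matching (sharing a vertex, or the alternative perfect matchings \<open>{ac, bd}\<close> and
  \<open>{ad, bc}\<close> of the four endpoints) to: \<open>a = c\<close>, \<open>b = d\<close>, or \<open>ac, bd \<in> E\<close>. Since
  \<open>a\<^sub>1 \<le> a\<^sub>2 \<le> a\<^sub>3\<close> and \<open>b\<^sub>1 \<le> b\<^sub>2 \<le> b\<^sub>3\<close>, the edges \<open>a\<^sub>1a\<^sub>3\<close> and \<open>b\<^sub>1b\<^sub>3\<close> force
  \<open>a\<^sub>1a\<^sub>2, a\<^sub>2a\<^sub>3, b\<^sub>1b\<^sub>2, b\<^sub>2b\<^sub>3 \<in> E\<close> by the defining property of a proper ordering.\<close>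

lemma ole_trans: "trans lt \<Longrightarrow> ole lt x y \<Longrightarrow> ole lt y z \<Longrightarrow> ole lt x z"
  unfolding ole_def by (meson transD)

lemma ole_antisym: "trans lt \<Longrightarrow> irrefl lt \<Longrightarrow> ole lt x y \<Longrightarrow> ole lt y x \<Longrightarrow> x = y"
  unfolding ole_def irrefl_def by (meson transD)

lemma ole_less_trans: "trans lt \<Longrightarrow> ole lt x y \<Longrightarrow> (y, z) \<in> lt \<Longrightarrow> (x, z) \<in> lt"
  unfolding ole_def by (meson transD)

lemma proper_vertex_ordering_trans: "proper_vertex_ordering V E lt \<Longrightarrow> trans lt"
  and proper_vertex_ordering_irrefl: "proper_vertex_ordering V E lt \<Longrightarrow> irrefl lt"
  unfolding proper_vertex_ordering_def strict_linear_order_on_def by auto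

lemma lend_rend_doubleton:
  assumes "trans lt" "irrefl lt" "(a, b) \<in> lt"
  shows "lend lt {a, b} = a" "rend lt {a, b} = b"
proof -
  have "(b, a) \<notin> lt" using assms by (meson irrefl_def transD)
  then show "lend lt {a, b} = a" "rend lt {a, b} = b"
    unfolding lend_def rend_def
    by (auto intro!: the_equality simp: ole_def assms(3))
qed

lemma edge_as_ordered_pair:
  assumes "graph V E" "proper_vertex_ordering V E lt" "e \<in> E"
  obtains a b where "e = {a, b}" "(a, b) \<in> lt"
proof -
  obtain u v where "u \<noteq> v" "u \<in> V" "v \<in> V" "e = {u, v}"
    using assms(1,3) unfolding graph_def by blast
  moreover have "total_on V lt"
    using assms(2) unfolding proper_vertex_ordering_def strict_linear_order_on_def by blast
  ultimately show thesis
    using that unfolding total_on_def by (metis insert_commute)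
qed

lemma edge_between_left:
  assumes "proper_vertex_ordering V E lt" "{u, w} \<in> E" "ole lt u v" "ole lt v w" "u \<noteq> v"
  shows "{u, v} \<in> E"
  using assms unfolding proper_vertex_ordering_def ole_def by blast

lemma edge_between_right:
  assumes "proper_vertex_ordering V E lt" "{u, w} \<in> E" "ole lt u v" "ole lt v w" "v \<noteq> w"
  shows "{v, w} \<in> E"
  using assms unfolding proper_vertex_ordering_def ole_def by blast

lemma not_uniquely_restricted_if_meet:
  assumes "e \<noteq> f" "e \<inter> f \<noteq> {}"
  shows "\<not> uniquely_restricted E {e, f}"
  using assms unfolding uniquely_restricted_def matching_def by blast

lemma uniquely_restrictedD:
  "uniquely_restricted E M \<Longrightarrow> matching E M' \<Longrightarrow> \<Union>M' = \<Union>M \<Longrightarrow> M' = M"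
  unfolding uniquely_restricted_def by blast

lemma not_uniquely_restrictedE:
  assumes "\<not> uniquely_restricted E M" "matching E M"
  obtains M' where "matching E M'" "\<Union>M' = \<Union>M" "M' \<noteq> M"
  using assms unfolding uniquely_restricted_def by blast

lemma not_uniquely_restricted_if_swap:
  assumes "{a, c} \<in> E" "{b, d} \<in> E"
    and "a \<noteq> b" "a \<noteq> c" "a \<noteq> d" "b \<noteq> c" "b \<noteq> d" "c \<noteq> d"
  shows "\<not> uniquely_restricted E {{a, b}, {c, d}}"
proof
  assume ur: "uniquely_restricted E {{a, b}, {c, d}}"
  have "{a, c} \<inter> {b, d} = {}" using assms by auto
  then have "matching E {{a, c}, {b, d}}"
    using assms(1,2) unfolding matching_def by auto
  moreover have "\<Union>{{a, c}, {b, d}} = \<Union>{{a, b}, {c, d}}" by auto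
  ultimately have "{{a, c}, {b, d}} = {{a, b}, {c, d}}"
    by (rule uniquely_restrictedD[OF ur])
  then have "{a, c} = {a, b} \<or> {a, c} = {c, d}" by (metis insertI1 insert_iff singletonD)
  then show False using assms by (simp add: doubleton_eq_iff)
qed

lemma graph_empty_notin: "graph V E \<Longrightarrow> {} \<notin> E"
  unfolding graph_def by blast

lemma matching_disjoint: "matching E M \<Longrightarrow> e \<in> M \<Longrightarrow> f \<in> M \<Longrightarrow> e \<noteq> f \<Longrightarrow> e \<inter> f = {}"
  unfolding matching_def by blast

lemma matching_partner:
  assumes "graph V E" "matching E M" "v \<in> \<Union>M"
  obtains w where "{v, w} \<in> M" "w \<noteq> v"
proof -
  obtain e where "e \<in> M" "v \<in> e" using assms(3) by blast
  moreover have "e \<in> E" using \<open>e \<in> M\<close> assms(2) unfolding matching_def by blast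
  then obtain u w where "u \<noteq> w" "e = {u, w}" using assms(1) unfolding graph_def by blast
  ultimately show thesis using that by (auto simp: insert_commute)
qed

lemma matching_unique_partner:
  assumes "matching E M" "{v, w} \<in> M" "{x, y} \<in> M" "{x, y} \<noteq> {v, w}"
  shows "v \<noteq> x" "v \<noteq> y" "w \<noteq> x" "w \<noteq> y"
proof -
  have "{x, y} \<inter> {v, w} = {}" using matching_disjoint assms by blast
  then show "v \<noteq> x" "v \<noteq> y" "w \<noteq> x" "w \<noteq> y" by auto
qed

lemma matching_eq_if_covers:
  assumes "matching E M" "{} \<notin> M" "N \<subseteq> M" "\<Union>M = \<Union>N"
  shows "M = N"
proof
  show "M \<subseteq> N"
  proof
    fix g assume "g \<in> M"
    then obtain x where "x \<in> g" using assms(2) by (metis ex_in_conv)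
    then obtain h where "h \<in> N" "x \<in> h" using \<open>g \<in> M\<close> assms(4) by blast
    then have "g \<inter> h \<noteq> {}" using \<open>x \<in> g\<close> by blast
    then show "g \<in> N"
      using matching_disjoint[OF assms(1) \<open>g \<in> M\<close>] \<open>h \<in> N\<close> assms(3) by blast
  qed
qed (use assms in blast)

lemma matching_on_four_vertices:
  assumes "graph V E" "matching E M" "\<Union>M = {a, b, c, d}" "M \<noteq> {{a, b}, {c, d}}"
    and "a \<noteq> b" "a \<noteq> c" "a \<noteq> d" "b \<noteq> c" "b \<noteq> d" "c \<noteq> d"
  shows "{{a, c}, {b, d}} \<subseteq> M \<or> {{a, d}, {b, c}} \<subseteq> M"
proof -
  have cover: "\<And>v w. {v, w} \<in> M \<Longrightarrow> w \<in> {a, b, c, d}" using assms(3) by blast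
  obtain x where ax: "{a, x} \<in> M" "x \<noteq> a" using matching_partner[OF assms(1,2)] assms(3) by blast
  obtain y where bpart: "{b, y} \<in> M" "y \<noteq> b" using matching_partner[OF assms(1,2)] assms(3) by blast
  obtain z where cz: "{c, z} \<in> M" "z \<noteq> c" using matching_partner[OF assms(1,2)] assms(3) by blast
  consider "x = b" | "x = c" | "x = d" using cover[OF ax(1)] ax(2) by blast
  then show ?thesis
  proof cases
    case 1
    have "{c, z} \<noteq> {a, b}" using assms(6,8) by (auto simp: doubleton_eq_iff)
    then have "z = d"
      using matching_unique_partner[OF assms(2) ax(1)[unfolded 1] cz(1)] cz(2) cover[OF cz(1)] by auto
    have "{} \<notin> M" using assms(1,2) graph_empty_notin unfolding matching_def by blast
    moreover have "{{a, b}, {c, d}} \<subseteq> M" using ax(1) cz(1) \<open>z = d\<close> 1 by simp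
    ultimately have "M = {{a, b}, {c, d}}"
      using matching_eq_if_covers[OF assms(2)] assms(3) by (simp add: insert_commute)
    with assms(4) show ?thesis by blast
  next
    case 2
    have "{b, y} \<noteq> {a, c}" using assms(5,8) by (auto simp: doubleton_eq_iff)
    then have "y = d"
      using matching_unique_partner[OF assms(2) ax(1)[unfolded 2] bpart(1)] bpart(2) cover[OF bpart(1)]
      by auto
    then show ?thesis using ax(1) bpart(1) 2 by blast
  next
    case 3
    have "{b, y} \<noteq> {a, d}" using assms(5,9) by (auto simp: doubleton_eq_iff)
    then have "y = c"
      using matching_unique_partner[OF assms(2) ax(1)[unfolded 3] bpart(1)] bpart(2) cover[OF bpart(1)]
      by auto
    then show ?thesis using ax(1) bpart(1) 3 by (auto simp: insert_commute)
  qed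
qed

lemma not_uniquely_restricted_iff:
  assumes "graph V E" and pvo: "proper_vertex_ordering V E lt"
    and "{a, b} \<in> E" "{c, d} \<in> E" "(a, b) \<in> lt" "(c, d) \<in> lt"
    and "ole lt a c" "ole lt b d" "{a, b} \<noteq> {c, d}"
  shows "\<not> uniquely_restricted E {{a, b}, {c, d}} \<longleftrightarrow>
    a = c \<or> b = d \<or> ({a, c} \<in> E \<and> {b, d} \<in> E)"
proof -
  have tr: "trans lt" and ir: "irrefl lt"
    using proper_vertex_ordering_trans proper_vertex_ordering_irrefl pvo by auto
  have "a \<noteq> b" "c \<noteq> d" using assms(5,6) ir unfolding irrefl_def by auto
  have "a \<noteq> d" using ole_less_trans[OF tr assms(7,6)] ir unfolding irrefl_def by auto
  show ?thesis
  proof (cases "{a, b} \<inter> {c, d} = {}")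
    case False
    then have "a = c \<or> b = d \<or> b = c" using \<open>a \<noteq> d\<close> by auto
    then show ?thesis using not_uniquely_restricted_if_meet[OF assms(9) False] assms(3,4) by auto
  next
    case True
    then have distinct: "a \<noteq> c" "a \<noteq> d" "b \<noteq> c" "b \<noteq> d" by auto
    have "{a, c} \<in> E \<and> {b, d} \<in> E" if "\<not> uniquely_restricted E {{a, b}, {c, d}}"
    proof -
      have "matching E {{a, b}, {c, d}}"
        using True assms(3,4) unfolding matching_def by auto
      with that obtain M where "matching E M" "\<Union>M = \<Union>{{a, b}, {c, d}}" "M \<noteq> {{a, b}, {c, d}}"
        by (rule not_uniquely_restrictedE)
      then have M: "matching E M" "\<Union>M = {a, b, c, d}" "M \<noteq> {{a, b}, {c, d}}" by auto
      have "M \<subseteq> E" using M(1) unfolding matching_def by blast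
      then have "({a, c} \<in> E \<and> {b, d} \<in> E) \<or> ({a, d} \<in> E \<and> {b, c} \<in> E)"
        using matching_on_four_vertices[OF assms(1) M \<open>a \<noteq> b\<close> distinct \<open>c \<noteq> d\<close>] by blast
      moreover have "{a, c} \<in> E \<and> {b, d} \<in> E" if "{a, d} \<in> E"
      proof
        show "{a, c} \<in> E"
          using edge_between_left[OF pvo that assms(7)] assms(6) distinct(1) by (simp add: ole_def)
        show "{b, d} \<in> E"
          using edge_between_right[OF pvo that _ assms(8)] assms(5) distinct(4) by (simp add: ole_def)
      qed
      ultimately show ?thesis by blast
    qed
    then show ?thesis
      using not_uniquely_restricted_if_swap[of a c E b d] \<open>a \<noteq> b\<close> \<open>c \<noteq> d\<close> distinct by blast
  qed
qed

lemma proper_vertex_ordering_link_between: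
  assumes pvo: "proper_vertex_ordering V E lt"
    and a: "ole lt a\<^sub>1 a\<^sub>2" "ole lt a\<^sub>2 a\<^sub>3" and b: "ole lt b\<^sub>1 b\<^sub>2" "ole lt b\<^sub>2 b\<^sub>3"
    and link: "a\<^sub>1 = a\<^sub>3 \<or> b\<^sub>1 = b\<^sub>3 \<or> ({a\<^sub>1, a\<^sub>3} \<in> E \<and> {b\<^sub>1, b\<^sub>3} \<in> E)"
  shows "a\<^sub>1 = a\<^sub>2 \<or> b\<^sub>1 = b\<^sub>2 \<or> ({a\<^sub>1, a\<^sub>2} \<in> E \<and> {b\<^sub>1, b\<^sub>2} \<in> E)"
    and "a\<^sub>2 = a\<^sub>3 \<or> b\<^sub>2 = b\<^sub>3 \<or> ({a\<^sub>2, a\<^sub>3} \<in> E \<and> {b\<^sub>2, b\<^sub>3} \<in> E)"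
proof -
  have tr: "trans lt" and ir: "irrefl lt"
    using proper_vertex_ordering_trans proper_vertex_ordering_irrefl pvo by auto
  have "a\<^sub>1 = a\<^sub>3 \<Longrightarrow> a\<^sub>1 = a\<^sub>2 \<and> a\<^sub>2 = a\<^sub>3" using ole_antisym[OF tr ir] a by blast
  moreover have "b\<^sub>1 = b\<^sub>3 \<Longrightarrow> b\<^sub>1 = b\<^sub>2 \<and> b\<^sub>2 = b\<^sub>3" using ole_antisym[OF tr ir] b by blast
  moreover have "{a\<^sub>1, a\<^sub>3} \<in> E \<Longrightarrow> (a\<^sub>1 = a\<^sub>2 \<or> {a\<^sub>1, a\<^sub>2} \<in> E) \<and> (a\<^sub>2 = a\<^sub>3 \<or> {a\<^sub>2, a\<^sub>3} \<in> E)"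
    using edge_between_left[OF pvo _ a] edge_between_right[OF pvo _ a] by blast
  moreover have "{b\<^sub>1, b\<^sub>3} \<in> E \<Longrightarrow> (b\<^sub>1 = b\<^sub>2 \<or> {b\<^sub>1, b\<^sub>2} \<in> E) \<and> (b\<^sub>2 = b\<^sub>3 \<or> {b\<^sub>2, b\<^sub>3} \<in> E)"
    using edge_between_left[OF pvo _ b] edge_between_right[OF pvo _ b] by blast
  ultimately show "a\<^sub>1 = a\<^sub>2 \<or> b\<^sub>1 = b\<^sub>2 \<or> ({a\<^sub>1, a\<^sub>2} \<in> E \<and> {b\<^sub>1, b\<^sub>2} \<in> E)"
    and "a\<^sub>2 = a\<^sub>3 \<or> b\<^sub>2 = b\<^sub>3 \<or> ({a\<^sub>2, a\<^sub>3} \<in> E \<and> {b\<^sub>2, b\<^sub>3} \<in> E)"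
    using link by blast+
qed

theorem lemma4:
  fixes V :: "'a set" and E :: "'a set set" and lt :: "('a \<times> 'a) set"
  assumes "proper_interval_graph V E"
    and "proper_vertex_ordering V E lt"
    and "e1 \<in> E" and "e2 \<in> E" and "e3 \<in> E"
    and "e1 \<noteq> e2" and "e1 \<noteq> e3" and "e2 \<noteq> e3"
    and "ole lt (lend lt e1) (lend lt e2)" and "ole lt (lend lt e2) (lend lt e3)"
    and "ole lt (rend lt e1) (rend lt e2)" and "ole lt (rend lt e2) (rend lt e3)"
    and "\<not> uniquely_restricted E {e1, e3}"
  shows "\<not> uniquely_restricted E {e1, e2} \<and> \<not> uniquely_restricted E {e2, e3}"
proof -
  note pvo = assms(2)
  have G: "graph V E" using assms(1) unfolding proper_interval_graph_def by blast
  have tr: "trans lt" and ir: "irrefl lt"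
    using proper_vertex_ordering_trans proper_vertex_ordering_irrefl pvo by auto
  obtain a1 b1 a2 b2 a3 b3 where e: "e1 = {a1, b1}" "e2 = {a2, b2}" "e3 = {a3, b3}"
    and lt: "(a1, b1) \<in> lt" "(a2, b2) \<in> lt" "(a3, b3) \<in> lt"
    using edge_as_ordered_pair[OF G pvo] assms(3-5) by metis
  have a: "ole lt a1 a2" "ole lt a2 a3" and b: "ole lt b1 b2" "ole lt b2 b3"
    using assms(9-12) lend_rend_doubleton[OF tr ir] lt unfolding e by auto
  have "a1 = a3 \<or> b1 = b3 \<or> ({a1, a3} \<in> E \<and> {b1, b3} \<in> E)"
    using not_uniquely_restricted_iff[OF G pvo _ _ lt(1,3) ole_trans[OF tr a] ole_trans[OF tr b]]
      assms(3,5,7,13) unfolding e by blast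
  note links = proper_vertex_ordering_link_between[OF pvo a b this]
  show ?thesis
    using links not_uniquely_restricted_iff[OF G pvo _ _ lt(1,2) a(1) b(1)]
      not_uniquely_restricted_iff[OF G pvo _ _ lt(2,3) a(2) b(2)]
      assms(3-6,8) unfolding e by blast
qed

end
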